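(* For every $n\geq1$, the number of $D_{2n}$-orbits of $\mathbf{X}_n$ whose elements have a stabilizer not contained in the rotation subgroup $\langle\sigma\rangle=\{1,\sigma,\dots,\sigma^{n-1}\}$ equals $r(n)$.
   Context: For $n\geq1$ let $V_n=\{v_0,\dots,v_{n-1}\}$, indices modulo $n$. The dihedral group $D_{2n}=\{1,\sigma,\dots,\sigma^{n-1},\tau,\sigma\tau,\dots,\sigma^{n-1}\tau\}$ acts on subsets of $V_n$ elementwise, with $\sigma(v_i)=v_{i+1}$, $\tau(v_i)=v_{n-i}$. Let $\mathbf{X}_n$ be the family of subsets $X\subseteq V_n$ such that (a) there is no $i\in\mathbb{Z}_n$ with $v_i,v_{i+1}\in X$, and (b) for every $i\in\mathbb{Z}_n$ at least one of $v_i,v_{i+1},v_{i+2}$ lies in $X$ (for $n\geq 3$: the maximal independent sets of the cycle graph $C_n$). For $X\in\mathbf{X}_n$, $\mathrm{Stab}(X)=\{g\in D_{2n}:g(X)=X\}$. The Padovan sequence is $q(1)=0$, $q(2)=1$, $q(3)=1$, $q(n)=q(n-2)+q(n-3)$ for $n\geq4$, and $r(2k-1)=q(k)$, $r(2k)=q(k+2)$ for $k\geq1$. *)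

theory Defs
  imports Main
begin

text \<open>Vertices v_0..v_{n-1} are represented by the naturals 0..<n (indices mod n).
  The dihedral group D_{2n} is represented by formal pairs (k,b) with k < n,
  standing for sigma^k (b = False) or sigma^k tau (b = True).\<close>

definition dihedral :: "nat \<Rightarrow> (nat \<times> bool) set" where
  "dihedral n = {(k, b). k < n}"

definition rotations :: "nat \<Rightarrow> (nat \<times> bool) set" where
  "rotations n = {(k, b). k < n \<and> \<not> b}"

text \<open>Action on vertices: sigma^k(v_i) = v_{i+k}; sigma^k tau (v_i) = v_{k-i}.\<close>
definition dact :: "nat \<Rightarrow> nat \<times> bool \<Rightarrow> nat \<Rightarrow> nat" where
  "dact n g i = (case g of (k, b) \<Rightarrow>
     (if b then (k + (n - i mod n)) mod n else (i + k) mod n))"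

definition dact_set :: "nat \<Rightarrow> nat \<times> bool \<Rightarrow> nat set \<Rightarrow> nat set" where
  "dact_set n g X = dact n g ` X"

definition Xfam :: "nat \<Rightarrow> nat set set" where
  "Xfam n = {X. X \<subseteq> {0..<n}
      \<and> (\<forall>i<n. \<not> (i \<in> X \<and> (i + 1) mod n \<in> X))
      \<and> (\<forall>i<n. i \<in> X \<or> (i + 1) mod n \<in> X \<or> (i + 2) mod n \<in> X)}"

definition Stab :: "nat \<Rightarrow> nat set \<Rightarrow> (nat \<times> bool) set" where
  "Stab n X = {g \<in> dihedral n. dact_set n g X = X}"

definition orbit :: "nat \<Rightarrow> nat set \<Rightarrow> nat set set" where
  "orbit n X = {dact_set n g X | g. g \<in> dihedral n}"

fun padovan :: "nat \<Rightarrow> nat" where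
  "padovan 0 = 0"
| "padovan (Suc 0) = 0"
| "padovan (Suc (Suc 0)) = 1"
| "padovan (Suc (Suc (Suc 0))) = 1"
| "padovan (Suc (Suc (Suc (Suc n)))) = padovan (Suc (Suc n)) + padovan (Suc n)"

definition r_seq :: "nat \<Rightarrow> nat" where
  "r_seq n = (if odd n then padovan ((n + 1) div 2) else padovan (n div 2 + 2))"

end

theory Submission
  imports Defs
begin

(* Lifting a subset of Z_n to an n-periodic subset of Z turns the maximal independent sets of
   C_n into the n-periodic maximal independent sets of the integer path (periodic sets whose
   consecutive points are 2 or 3 apart), and the dihedral action into the translations
   z \<mapsto> z + j and reflections z \<mapsto> k - z.  Counting pairs (reflection, fixed set) in
   two ways, n times the number of orbits with a reflection symmetry is the sum over k of the
   number of sets fixed by z \<mapsto> k - z, which only depends on the parity of k.  A set fixed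
   by that reflection is also fixed by z \<mapsto> k + n - z and is determined by its points
   between the two axes k/2 and (k + n)/2: a chain with steps 2 and 3 whose ends lie at
   (doubled) distance 0, 2 or 3 from the axes.  Such chains are counted by Padovan numbers. *)

section \<open>Periodic independent sets of the integer path\<close>

definition translate :: "int \<Rightarrow> int set \<Rightarrow> int set" where
  "translate j P = {z. z - j \<in> P}"

definition reflect :: "int \<Rightarrow> int set \<Rightarrow> int set" where
  "reflect k P = {z. k - z \<in> P}"

definition periodic :: "int \<Rightarrow> int set \<Rightarrow> bool" where
  "periodic N P \<longleftrightarrow> (\<forall>z. z + N \<in> P \<longleftrightarrow> z \<in> P)"

definition path_mis :: "int set \<Rightarrow> bool" where
  "path_mis P \<longleftrightarrow> (\<forall>z. \<not> (z \<in> P \<and> z + 1 \<in> P)) \<and> (\<forall>z. z \<in> P \<or> z + 1 \<in> P \<or> z + 2 \<in> P)"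

definition periodic_mis :: "int \<Rightarrow> int set set" where
  "periodic_mis N = {P. periodic N P \<and> path_mis P}"

definition gap_after :: "int set \<Rightarrow> int \<Rightarrow> bool" where
  "gap_after P x \<longleftrightarrow> x + 1 \<notin> P \<and> (x + 2 \<in> P \<or> x + 3 \<in> P)"

definition gap_before :: "int set \<Rightarrow> int \<Rightarrow> bool" where
  "gap_before P x \<longleftrightarrow> x - 1 \<notin> P \<and> (x - 2 \<in> P \<or> x - 3 \<in> P)"

lemma mem_translate [simp]: "z \<in> translate j P \<longleftrightarrow> z - j \<in> P"
  by (simp add: translate_def)

lemma mem_reflect [simp]: "z \<in> reflect k P \<longleftrightarrow> k - z \<in> P"
  by (simp add: reflect_def)

lemma translate_translate [simp]: "translate i (translate j P) = translate (i + j) P"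
  by (auto simp: algebra_simps)

lemma translate_0 [simp]: "translate 0 P = P"
  by auto

lemma reflect_reflect [simp]: "reflect i (reflect j P) = translate (i - j) P"
  by (auto simp: algebra_simps)

lemma reflect_translate [simp]: "reflect i (translate j P) = reflect (i - j) P"
  by (auto simp: algebra_simps)

lemma translate_reflect [simp]: "translate i (reflect j P) = reflect (i + j) P"
  by (auto simp: algebra_simps)

lemma translate_inject [simp]: "translate j P = translate j Q \<longleftrightarrow> P = Q"
proof
  assume "translate j P = translate j Q"
  then have "translate (- j) (translate j P) = translate (- j) (translate j Q)"
    by simp
  then show "P = Q"
    by simp
qed simp

lemma reflect_fixed_mem: "reflect k P = P \<Longrightarrow> k - z \<in> P \<longleftrightarrow> z \<in> P"
  by (metis mem_reflect)

lemma periodic_add_mult: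
  assumes "periodic N P"
  shows "z + m * N \<in> P \<longleftrightarrow> z \<in> P"
proof (induction m arbitrary: z rule: int_induct[where k = 0])
  case (step1 m)
  have "z + (m + 1) * N = (z + m * N) + N"
    by (simp add: algebra_simps)
  moreover have "(z + m * N) + N \<in> P \<longleftrightarrow> z + m * N \<in> P"
    using assms unfolding periodic_def by blast
  ultimately show ?case
    using step1.IH[of z] by metis
next
  case (step2 m)
  have "z + m * N = (z + (m - 1) * N) + N"
    by (simp add: algebra_simps)
  moreover have "(z + (m - 1) * N) + N \<in> P \<longleftrightarrow> z + (m - 1) * N \<in> P"
    using assms unfolding periodic_def by blast
  ultimately show ?case
    using step2.IH[of z] by metis
qed simp

lemma translate_periodic:
  assumes "periodic N P"
  shows "translate (j + m * N) P = translate j P"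
proof (rule set_eqI)
  fix z
  have "z - j = (z - (j + m * N)) + m * N"
    by simp
  then show "z \<in> translate (j + m * N) P \<longleftrightarrow> z \<in> translate j P"
    using periodic_add_mult[OF assms, of "z - (j + m * N)" m] by simp
qed

lemma reflect_periodic:
  assumes "periodic N P"
  shows "reflect (k + m * N) P = reflect k P"
proof (rule set_eqI)
  fix z
  have "k + m * N - z = (k - z) + m * N"
    by simp
  then show "z \<in> reflect (k + m * N) P \<longleftrightarrow> z \<in> reflect k P"
    using periodic_add_mult[OF assms, of "k - z" m] by (simp only: mem_reflect)
qed

lemma periodic_translate: "periodic N P \<Longrightarrow> periodic N (translate j P)"
  unfolding periodic_def mem_translate by (simp add: diff_add_eq[symmetric])

lemma periodic_reflect:
  assumes "periodic N P"
  shows "periodic N (reflect k P)"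
  unfolding periodic_def mem_reflect
proof
  fix z
  have "k - (z + N) + N \<in> P \<longleftrightarrow> k - (z + N) \<in> P"
    using assms unfolding periodic_def by blast
  then show "k - (z + N) \<in> P \<longleftrightarrow> k - z \<in> P"
    by simp
qed

lemma periodic_mod:
  assumes "periodic N P"
  shows "z mod N \<in> P \<longleftrightarrow> z \<in> P"
  using periodic_add_mult[OF assms, of "z mod N" "z div N"] by simp

lemma path_mis_translate:
  assumes "path_mis P"
  shows "path_mis (translate j P)"
proof -
  have "z + 1 - j = (z - j) + 1" "z + 2 - j = (z - j) + 2" for z
    by simp_all
  then show ?thesis
    using assms unfolding path_mis_def mem_translate by metis
qed

lemma path_mis_reflect:
  assumes "path_mis P"
  shows "path_mis (reflect k P)"
proof -
  have "k - z = (k - (z + 1)) + 1" "k - (z + 2) + 1 = k - (z + 1)" "k - (z + 2) + 2 = k - z" for z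
    by simp_all
  then show ?thesis
    using assms unfolding path_mis_def mem_reflect by metis
qed

lemma periodic_mis_translate: "P \<in> periodic_mis N \<Longrightarrow> translate j P \<in> periodic_mis N"
  by (simp add: periodic_mis_def periodic_translate path_mis_translate)

lemma path_mis_gap_after:
  assumes "path_mis P" "x \<in> P"
  shows "gap_after P x"
proof -
  have "x + 1 \<notin> P" and "x + 1 \<in> P \<or> x + 1 + 1 \<in> P \<or> x + 1 + 2 \<in> P"
    using assms unfolding path_mis_def by blast+
  then show ?thesis
    unfolding gap_after_def by (simp add: add.assoc)
qed

lemma path_mis_gap_before:
  assumes "path_mis P" "x \<in> P"
  shows "gap_before P x"
proof -
  have "x - 1 \<notin> P" and "x - 3 \<in> P \<or> x - 3 + 1 \<in> P \<or> x - 3 + 2 \<in> P"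
    using assms unfolding path_mis_def by (metis diff_add_cancel, blast)
  then show ?thesis
    unfolding gap_before_def by auto
qed

lemma gaps_cover_above:
  assumes gaps: "\<forall>x\<in>P. gap_after P x" and "x \<in> P" "x \<le> z"
  shows "z \<in> P \<or> z + 1 \<in> P \<or> z + 2 \<in> P"
  using assms(2,3)
proof (induction "nat (z - x)" arbitrary: x rule: less_induct)
  case less
  show ?case
  proof (cases "x = z")
    case False
    obtain y where y: "y \<in> P" "y = x + 2 \<or> y = x + 3"
      using gaps less.prems unfolding gap_after_def by blast
    show ?thesis
    proof (cases "y \<le> z")
      case True
      then show ?thesis
        using less.hyps[of y] y less.prems False by auto
    next
      case False
      then have "y = z + 1 \<or> y = z + 2"
        using y less.prems \<open>x \<noteq> z\<close> by linarith
      then show ?thesis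
        using y by auto
    qed
  qed (use less.prems in simp)
qed

lemma periodic_gaps_imp_path_mis:
  assumes "N > 0" "periodic N P" "p \<in> P" and gaps: "\<forall>x\<in>P. gap_after P x"
  shows "path_mis P"
proof -
  have "z \<in> P \<or> z + 1 \<in> P \<or> z + 2 \<in> P" for z
  proof (rule gaps_cover_above[OF gaps])
    show "p + (- \<bar>p - z\<bar>) * N \<in> P"
      using periodic_add_mult[OF assms(2)] assms(3) by blast
    have "\<bar>p - z\<bar> \<le> \<bar>p - z\<bar> * N"
      using assms(1) by (simp add: mult_le_cancel_left1)
    then show "p + (- \<bar>p - z\<bar>) * N \<le> z"
      by linarith
  qed
  moreover have "\<not> (z \<in> P \<and> z + 1 \<in> P)" for z
    using gaps unfolding gap_after_def by blast
  ultimately show ?thesis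
    unfolding path_mis_def by blast
qed

lemma gap_after_add_mult:
  assumes "periodic N S"
  shows "gap_after S (x + m * N) \<longleftrightarrow> gap_after S x"
proof -
  have "x + m * N + j \<in> S \<longleftrightarrow> x + j + m * N \<in> S" for j
    by (simp add: algebra_simps)
  then have "x + m * N + j \<in> S \<longleftrightarrow> x + j \<in> S" for j
    using periodic_add_mult[OF assms] by blast
  then show ?thesis
    unfolding gap_after_def by simp
qed

lemma gap_after_reflect:
  assumes "reflect k S = S"
  shows "gap_after S (k - x) \<longleftrightarrow> gap_before S x"
proof -
  have "k - x + j \<in> S \<longleftrightarrow> k - (x - j) \<in> S" for j
    by (simp add: algebra_simps)
  then have "k - x + j \<in> S \<longleftrightarrow> x - j \<in> S" for j
    using reflect_fixed_mem[OF assms] by blast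
  then show ?thesis
    unfolding gap_after_def gap_before_def by simp
qed

lemma gap_after_iff_gap_before_on_axis:
  assumes "reflect a S = S" "2 * x = a"
  shows "gap_after S x \<longleftrightarrow> gap_before S x"
proof -
  have "a - x = x"
    using assms(2) by simp
  then show ?thesis
    using gap_after_reflect[OF assms(1), of x] by simp
qed

lemma gap_after_near_axis:
  assumes "reflect a S = S" "x \<in> S" "a - 2 * x \<in> {2, 3}" "x + 1 \<notin> S"
  shows "gap_after S x"
proof -
  have "a - x \<in> S"
    using reflect_fixed_mem[OF assms(1)] assms(2) by blast
  moreover have "a - x = x + 2 \<or> a - x = x + 3"
    using assms(3) by auto
  ultimately show ?thesis
    using assms(4) unfolding gap_after_def by auto
qed

lemma gap_before_near_axis:
  assumes "reflect a S = S" "x \<in> S" "2 * x - a \<in> {2, 3}" "x - 1 \<notin> S"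
  shows "gap_before S x"
proof -
  have "a - x \<in> S"
    using reflect_fixed_mem[OF assms(1)] assms(2) by blast
  moreover have "a - x = x - 2 \<or> a - x = x - 3"
    using assms(3) by auto
  ultimately show ?thesis
    using assms(4) unfolding gap_before_def by auto
qed

lemma finite_periodic_mis:
  assumes "N > 0"
  shows "finite (periodic_mis N)"
proof (rule finite_subset)
  show "periodic_mis N \<subseteq> (\<lambda>S. {z. z mod N \<in> S}) ` Pow {0..<N}"
  proof
    fix P
    assume "P \<in> periodic_mis N"
    then have "P = {z. z mod N \<in> P \<inter> {0..<N}}"
      using periodic_mod[of N P] assms by (auto simp: periodic_mis_def)
    then show "P \<in> (\<lambda>S. {z. z mod N \<in> S}) ` Pow {0..<N}"
      by blast
  qed
qed simp

lemma periodic_mis_1: "periodic_mis 1 = {}"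
proof -
  have False if per: "periodic 1 P" and mis: "path_mis P" for P
  proof -
    obtain z where "z \<in> P"
      using mis unfolding path_mis_def by blast
    moreover have "z + 1 \<in> P \<longleftrightarrow> z \<in> P"
      using per unfolding periodic_def by blast
    ultimately show False
      using mis unfolding path_mis_def by blast
  qed
  then show ?thesis
    unfolding periodic_mis_def by blast
qed

section \<open>Chains with steps 2 and 3\<close>

lemma gap_after_restrict:
  assumes "gap_after S x" "w \<in> S" "a \<le> x" "x < w"
  shows "gap_after (S \<inter> {a..w}) x"
proof -
  have "w \<noteq> x + 1" "x + 2 \<notin> S \<Longrightarrow> w \<noteq> x + 2"
    using assms(1,2) unfolding gap_after_def by auto
  then show ?thesis
    using assms unfolding gap_after_def by auto
qed

lemma gap_before_restrict:
  assumes "gap_before S x" "a \<in> S" "a < x" "x \<le> b"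
  shows "gap_before (S \<inter> {a..b}) x"
proof -
  have "a \<noteq> x - 1" "x - 2 \<notin> S \<Longrightarrow> a \<noteq> x - 2"
    using assms(1,2) unfolding gap_before_def by auto
  then show ?thesis
    using assms unfolding gap_before_def by auto
qed

definition gap_chains :: "int \<Rightarrow> int \<Rightarrow> int set set" where
  "gap_chains u v = {B. B \<subseteq> {u..v} \<and> u \<in> B \<and> v \<in> B
     \<and> (\<forall>x\<in>B. x < v \<longrightarrow> gap_after B x) \<and> (\<forall>x\<in>B. u < x \<longrightarrow> gap_before B x)}"

lemma gap_chains_subset: "B \<in> gap_chains u v \<Longrightarrow> B \<subseteq> {u..v}"
  by (simp add: gap_chains_def)

lemma gap_chains_first: "B \<in> gap_chains u v \<Longrightarrow> u \<in> B"
  by (simp add: gap_chains_def)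

lemma gap_chains_last: "B \<in> gap_chains u v \<Longrightarrow> v \<in> B"
  by (simp add: gap_chains_def)

lemma gap_chains_gap_after: "B \<in> gap_chains u v \<Longrightarrow> x \<in> B \<Longrightarrow> x < v \<Longrightarrow> gap_after B x"
  by (simp add: gap_chains_def)

lemma gap_chains_gap_before: "B \<in> gap_chains u v \<Longrightarrow> x \<in> B \<Longrightarrow> u < x \<Longrightarrow> gap_before B x"
  by (simp add: gap_chains_def)

lemma finite_gap_chains: "finite (gap_chains u v)"
  by (rule finite_subset[of _ "Pow {u..v}"]) (auto simp: gap_chains_def)

lemma gap_chains_empty: "v < u \<Longrightarrow> gap_chains u v = {}"
  by (auto simp: gap_chains_def)

lemma gap_chains_singleton: "gap_chains u u = {{u}}"
  by (auto simp: gap_chains_def)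

lemma gap_chains_truncate:
  assumes B: "B \<in> gap_chains u v" and w: "w \<in> B"
  shows "B \<inter> {u..w} \<in> gap_chains u w"
proof -
  have sub: "B \<subseteq> {u..v}" and uB: "u \<in> B"
    using B by (simp_all add: gap_chains_def)
  have "gap_after (B \<inter> {u..w}) x" if "x \<in> B" "u \<le> x" "x < w" for x
    using gap_after_restrict[OF gap_chains_gap_after[OF B] w] that w sub by force
  moreover have "gap_before (B \<inter> {u..w}) x" if "x \<in> B" "u < x" "x \<le> w" for x
    using gap_before_restrict[OF gap_chains_gap_before[OF B] uB] that by blast
  ultimately show ?thesis
    using w sub uB unfolding gap_chains_def by auto
qed

lemma path_mis_restrict:
  assumes P: "path_mis P" and uv: "u \<in> P" "v \<in> P" "u \<le> v"
  shows "P \<inter> {u..v} \<in> gap_chains u v"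
proof -
  have "gap_after (P \<inter> {u..v}) x" if "x \<in> P" "u \<le> x" "x < v" for x
    using gap_after_restrict[OF path_mis_gap_after[OF P] uv(2)] that by blast
  moreover have "gap_before (P \<inter> {u..v}) x" if "x \<in> P" "u < x" "x \<le> v" for x
    using gap_before_restrict[OF path_mis_gap_before[OF P] uv(1)] that by blast
  ultimately show ?thesis
    using uv unfolding gap_chains_def by auto
qed

lemma gap_chains_extend:
  assumes B: "B \<in> gap_chains u w" and v: "v = w + 2 \<or> v = w + 3"
  shows "insert v B \<in> gap_chains u v"
proof -
  have sub: "B \<subseteq> {u..w}" and wB: "w \<in> B"
    using B by (simp_all add: gap_chains_def)
  have "gap_after (insert v B) x" if "x \<in> B" "x < v" for x
  proof (cases "x = w")
    case False
    then show ?thesis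
      using gap_chains_gap_after[OF B that(1)] that sub v unfolding gap_after_def by force
  qed (use v sub in \<open>auto simp: gap_after_def\<close>)
  moreover have "gap_before (insert v B) x" if "x \<in> B" "u < x" for x
    using gap_chains_gap_before[OF B that] sub v that unfolding gap_before_def by force
  moreover have "gap_before (insert v B) v"
    using v sub wB unfolding gap_before_def by force
  ultimately show ?thesis
    using sub v gap_chains_first[OF B] unfolding gap_chains_def by auto
qed

lemma gap_chains_step:
  assumes "u < v"
  shows "gap_chains u v = insert v ` gap_chains u (v - 2) \<union> insert v ` gap_chains u (v - 3)"
proof
  show "gap_chains u v \<subseteq> insert v ` gap_chains u (v - 2) \<union> insert v ` gap_chains u (v - 3)"
  proof
    fix B
    assume B: "B \<in> gap_chains u v"
    have sub: "B \<subseteq> {u..v}" and vB: "v \<in> B"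
      using B by (simp_all add: gap_chains_def)
    have gap: "v - 1 \<notin> B" "v - 2 \<in> B \<or> v - 3 \<in> B"
      using gap_chains_gap_before[OF B vB assms] unfolding gap_before_def by auto
    show "B \<in> insert v ` gap_chains u (v - 2) \<union> insert v ` gap_chains u (v - 3)"
    proof (cases "v - 2 \<in> B")
      case True
      have "x \<le> v - 2" if "x \<in> B" "x \<noteq> v" for x
        using that sub gap(1) by (smt (verit) atLeastAtMost_iff subsetD)
      then have "B = insert v (B \<inter> {u..v - 2})"
        using sub vB by auto
      then show ?thesis
        using gap_chains_truncate[OF B True] by blast
    next
      case False
      have "x \<le> v - 3" if "x \<in> B" "x \<noteq> v" for x
        using that sub gap(1) False by (smt (verit) atLeastAtMost_iff subsetD)
      then have "B = insert v (B \<inter> {u..v - 3})"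
        using sub vB by auto
      then show ?thesis
        using gap_chains_truncate[OF B] gap(2) False by blast
    qed
  qed
  show "insert v ` gap_chains u (v - 2) \<union> insert v ` gap_chains u (v - 3) \<subseteq> gap_chains u v"
    using gap_chains_extend[of _ u "v - 2" v] gap_chains_extend[of _ u "v - 3" v] by auto
qed

lemma card_gap_chains_step:
  assumes "u < v"
  shows "card (gap_chains u v) = card (gap_chains u (v - 2)) + card (gap_chains u (v - 3))"
proof -
  have inj: "inj_on (insert v) (gap_chains u w)" if "w < v" for w
  proof (rule inj_onI)
    fix B C
    assume B: "B \<in> gap_chains u w" and C: "C \<in> gap_chains u w" and eq: "insert v B = insert v C"
    have "v \<notin> B" "v \<notin> C"
      using gap_chains_subset[OF B] gap_chains_subset[OF C] that by auto
    then show "B = C"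
      using eq insert_ident by metis
  qed
  have "v - 2 \<in> insert v B" if "B \<in> gap_chains u (v - 2)" for B
    using gap_chains_last[OF that] by simp
  moreover have "v - 2 \<notin> insert v B" if "B \<in> gap_chains u (v - 3)" for B
    using gap_chains_subset[OF that] by auto
  ultimately have disjoint: "insert v ` gap_chains u (v - 2) \<inter> insert v ` gap_chains u (v - 3) = {}"
    by blast
  show ?thesis
    unfolding gap_chains_step[OF assms]
    by (simp add: card_Un_disjoint[OF _ _ disjoint] finite_gap_chains card_image inj)
qed

text \<open>The formula also covers v < u, where nat (v - u) = 0 and padovan 0 = 0.\<close>

lemma card_gap_chains: "card (gap_chains u v) = (if u = v then 1 else padovan (nat (v - u)))"
proof (induction "nat (v - u)" arbitrary: v rule: less_induct)
  case less
  consider "v < u" | "v = u" | "v = u + 1" | "v = u + 2" | "v = u + 3" | "u + 4 \<le> v"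
    by linarith
  then show ?case
  proof cases
    case 1
    then show ?thesis
      by (simp add: gap_chains_empty)
  next
    case 2
    then show ?thesis
      by (simp add: gap_chains_singleton)
  next
    case 3
    then show ?thesis
      by (simp add: card_gap_chains_step gap_chains_empty)
  next
    case 4
    then show ?thesis
      by (simp add: card_gap_chains_step gap_chains_empty gap_chains_singleton numeral_eq_Suc)
  next
    case 5
    then show ?thesis
      using less[of "v - 2"] by (simp add: card_gap_chains_step gap_chains_singleton numeral_eq_Suc)
  next
    case 6
    define m where "m = nat (v - u) - 4"
    have m: "nat (v - u) = Suc (Suc (Suc (Suc m)))"
      using 6 unfolding m_def by arith
    have "nat (v - 2 - u) = Suc (Suc m)" "nat (v - 3 - u) = Suc m"
      using m by auto
    then show ?thesis
      using less[of "v - 2"] less[of "v - 3"] 6 m by (simp add: card_gap_chains_step)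
  qed
qed

lemma card_gap_chains_translate: "card (gap_chains u v) = card (gap_chains 0 (v - u))"
  by (simp add: card_gap_chains)

section \<open>Sets with a reflection symmetry\<close>

lemma int_mult_cases:
  fixes m N :: int
  assumes "0 < N"
  obtains "m * N \<le> - N" | "m = 0" | "m = 1" | "2 * N \<le> m * N"
proof -
  consider "m \<le> -1" | "m = 0" | "m = 1" | "m \<ge> 2"
    by linarith
  then show ?thesis
    using assms that mult_right_mono[of m "-1" N] mult_right_mono[of 2 m N] by cases auto
qed

definition dihedral_closure :: "int \<Rightarrow> int \<Rightarrow> int set \<Rightarrow> int set" where
  "dihedral_closure N k B = {z. \<exists>b\<in>B. \<exists>m. z = b + m * N \<or> z = k - b + m * N}"

lemma dihedral_closure_add_mult: "z + m * N \<in> dihedral_closure N k B \<longleftrightarrow> z \<in> dihedral_closure N k B"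
proof
  assume "z + m * N \<in> dihedral_closure N k B"
  then obtain b m' where "b \<in> B" "z + m * N = b + m' * N \<or> z + m * N = k - b + m' * N"
    unfolding dihedral_closure_def by blast
  then have "b \<in> B" "z = b + (m' - m) * N \<or> z = k - b + (m' - m) * N"
    by (auto simp: algebra_simps)
  then show "z \<in> dihedral_closure N k B"
    unfolding dihedral_closure_def by blast
next
  assume "z \<in> dihedral_closure N k B"
  then obtain b m' where "b \<in> B" "z = b + m' * N \<or> z = k - b + m' * N"
    unfolding dihedral_closure_def by blast
  then have "b \<in> B" "z + m * N = b + (m' + m) * N \<or> z + m * N = k - b + (m' + m) * N"
    by (auto simp: algebra_simps)
  then show "z + m * N \<in> dihedral_closure N k B"
    unfolding dihedral_closure_def by blast
qed

lemma periodic_dihedral_closure: "periodic N (dihedral_closure N k B)"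
  unfolding periodic_def using dihedral_closure_add_mult[of _ 1] by simp

lemma dihedral_closure_reflect: "k - z \<in> dihedral_closure N k B \<longleftrightarrow> z \<in> dihedral_closure N k B"
proof -
  have "z \<in> dihedral_closure N k B" if z: "k - z \<in> dihedral_closure N k B" for z
  proof -
    obtain b m where "b \<in> B" "k - z = b + m * N \<or> k - z = k - b + m * N"
      using z unfolding dihedral_closure_def by blast
    then have "b \<in> B" "z = k - b + (- m) * N \<or> z = b + (- m) * N"
      by (auto simp: algebra_simps)
    then show ?thesis
      unfolding dihedral_closure_def by blast
  qed
  from this[of z] this[of "k - z"] show ?thesis
    by auto
qed

lemma reflect_dihedral_closure: "reflect k (dihedral_closure N k B) = dihedral_closure N k B"
  using dihedral_closure_reflect by (auto simp: set_eq_iff)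

lemma subset_dihedral_closure: "B \<subseteq> dihedral_closure N k B"
  unfolding dihedral_closure_def by force

lemma dihedral_closure_subset:
  assumes "periodic N P" "reflect k P = P" "B \<subseteq> P"
  shows "dihedral_closure N k B \<subseteq> P"
proof
  fix z
  assume "z \<in> dihedral_closure N k B"
  then obtain b m where "b \<in> B" "z = b + m * N \<or> z = k - b + m * N"
    unfolding dihedral_closure_def by blast
  moreover have "k - b \<in> P" if "b \<in> P"
    using that reflect_fixed_mem[OF assms(2)] by blast
  ultimately show "z \<in> P"
    using assms(3) periodic_add_mult[OF assms(1)] by auto
qed

lemma fundamental_domain:
  fixes N k z :: int
  assumes "0 < N"
  obtains w m where "k \<le> 2 * w" "2 * w \<le> k + N" "z = w + m * N \<or> z = k - w + m * N"
proof -
  define m where "m = (2 * z - k) div (2 * N)"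
  define r where "r = (2 * z - k) mod (2 * N)"
  have "2 * z - k = m * (2 * N) + r"
    unfolding m_def r_def by (rule div_mult_mod_eq[symmetric])
  then have e: "2 * z - k = 2 * (m * N) + r"
    by (simp add: algebra_simps)
  have r: "0 \<le> r" "r < 2 * N"
    using assms unfolding r_def by simp_all
  show ?thesis
  proof (cases "r \<le> N")
    case True
    then show ?thesis
      using that[of "z - m * N" m] e r by (simp add: algebra_simps)
  next
    case False
    then show ?thesis
      using that[of "k - z + (m + 1) * N" "m + 1"] e r by (simp add: algebra_simps)
  qed
qed

lemma dihedral_closure_fundamental_domain:
  assumes "0 < N" "periodic N P" "reflect k P = P"
  shows "dihedral_closure N k (P \<inter> {w. k \<le> 2 * w \<and> 2 * w \<le> k + N}) = P"
proof
  show "dihedral_closure N k (P \<inter> {w. k \<le> 2 * w \<and> 2 * w \<le> k + N}) \<subseteq> P"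
    using dihedral_closure_subset[OF assms(2,3)] by blast
  show "P \<subseteq> dihedral_closure N k (P \<inter> {w. k \<le> 2 * w \<and> 2 * w \<le> k + N})"
  proof
    fix z
    assume z: "z \<in> P"
    obtain w m where w: "k \<le> 2 * w" "2 * w \<le> k + N" and z_eq: "z = w + m * N \<or> z = k - w + m * N"
      using fundamental_domain[OF assms(1)] by blast
    have "w \<in> P \<or> k - w \<in> P"
      using z z_eq periodic_add_mult[OF assms(2)] by auto
    then have "w \<in> P"
      using reflect_fixed_mem[OF assms(3)] by blast
    then show "z \<in> dihedral_closure N k (P \<inter> {w. k \<le> 2 * w \<and> 2 * w \<le> k + N})"
      using w z_eq unfolding dihedral_closure_def by blast
  qed
qed

definition symmetric_mis :: "int \<Rightarrow> int \<Rightarrow> int set set" where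
  "symmetric_mis N k = {P \<in> periodic_mis N. reflect k P = P}"

text \<open>A set fixed by z \<mapsto> k - z is determined by its points in the fundamental domain
  k \<le> 2 z \<le> k + N between its two reflection axes; u and v are the first and last of them.\<close>

definition symmetric_mis_ends :: "int \<Rightarrow> int \<Rightarrow> int \<Rightarrow> int \<Rightarrow> int set set" where
  "symmetric_mis_ends N k u v = {P \<in> symmetric_mis N k. u \<in> P \<and> v \<in> P
     \<and> (\<forall>z\<in>P. k \<le> 2 * z \<longrightarrow> 2 * z \<le> k + N \<longrightarrow> u \<le> z \<and> z \<le> v)}"

locale symmetric_segment =
  fixes N k u v :: int
  assumes N_ge_2: "2 \<le> N"
    and left_end: "2 * u - k \<in> {0, 2, 3}"
    and right_end: "k + N - 2 * v \<in> {0, 2, 3}"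
begin

lemma left_bound: "k \<le> 2 * u" and right_bound: "2 * v \<le> k + N"
  using left_end right_end by auto

lemma N_pos: "0 < N"
  using N_ge_2 by simp

lemma dihedral_closure_inter_domain:
  assumes B: "B \<subseteq> {u..v}" and z: "k \<le> 2 * z" "2 * z \<le> k + N"
  shows "z \<in> dihedral_closure N k B \<longleftrightarrow> z \<in> B"
proof
  assume "z \<in> dihedral_closure N k B"
  then obtain b m where b: "b \<in> B" and z_eq: "z = b + m * N \<or> z = k - b + m * N"
    unfolding dihedral_closure_def by blast
  have "u \<le> b" "b \<le> v"
    using b B by auto
  have "z = b"
    using N_pos
  proof (cases rule: int_mult_cases[of N m])
    case 2
    then show ?thesis
      using z_eq z \<open>u \<le> b\<close> \<open>b \<le> v\<close> left_bound right_bound by auto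
  next
    case 3
    then show ?thesis
      using z_eq z \<open>u \<le> b\<close> \<open>b \<le> v\<close> left_bound right_bound by auto
  qed (use z_eq z \<open>u \<le> b\<close> \<open>b \<le> v\<close> left_bound right_bound in linarith)+
  then show "z \<in> B"
    using b by simp
qed (use subset_dihedral_closure in blast)

lemma gap_after_dihedral_closure_inner:
  assumes B: "B \<in> gap_chains u v" and b: "b \<in> B" "b < v"
  shows "gap_after (dihedral_closure N k B) b"
proof -
  have sub: "B \<subseteq> {u..v}"
    using B by (rule gap_chains_subset)
  have "gap_after B b"
    using B b by (rule gap_chains_gap_after)
  moreover have "b + 1 \<notin> dihedral_closure N k B" if "b + 1 \<notin> B"
    using dihedral_closure_inter_domain[OF sub, of "b + 1"] that b sub left_bound right_bound by auto
  ultimately show ?thesis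
    using subset_dihedral_closure[of B N k] unfolding gap_after_def by blast
qed

lemma gap_before_dihedral_closure_inner:
  assumes B: "B \<in> gap_chains u v" and b: "b \<in> B" "u < b"
  shows "gap_before (dihedral_closure N k B) b"
proof -
  have sub: "B \<subseteq> {u..v}"
    using B by (rule gap_chains_subset)
  have "gap_before B b"
    using B b by (rule gap_chains_gap_before)
  moreover have "b - 1 \<notin> dihedral_closure N k B" if "b - 1 \<notin> B"
    using dihedral_closure_inter_domain[OF sub, of "b - 1"] that b sub left_bound right_bound by auto
  ultimately show ?thesis
    using subset_dihedral_closure[of B N k] unfolding gap_before_def by blast
qed

text \<open>At the two ends of the segment the gap property of the closure comes from its reflection
  symmetry about k/2 and (k + N)/2; a one-point segment additionally forces N \<in> {2, 3}.\<close>

lemma gap_after_dihedral_closure_last: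
  assumes B: "B \<in> gap_chains u v"
  shows "gap_after (dihedral_closure N k B) v"
proof -
  let ?C = "dihedral_closure N k B"
  have sub: "B \<subseteq> {u..v}" and uB: "u \<in> B" and vB: "v \<in> B"
    using B by (simp_all add: gap_chains_def)
  have vC: "v \<in> ?C"
    using vB subset_dihedral_closure by blast
  have sym: "reflect (k + N) ?C = ?C"
    using reflect_periodic[OF periodic_dihedral_closure, of "k" 1 N k B] reflect_dihedral_closure by simp
  show ?thesis
  proof (cases "k + N - 2 * v = 0")
    case True
    have "gap_before ?C v"
    proof (cases "u < v")
      case True
      then show ?thesis
        using gap_before_dihedral_closure_inner[OF B vB] by blast
    next
      case False
      then have "u = v"
        using sub uB by auto
      then have "v - 1 \<notin> ?C"
        using dihedral_closure_inter_domain[OF sub, of "v - 1"] \<open>k + N - 2 * v = 0\<close> N_ge_2 sub by auto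
      moreover have "N = 2 \<or> N = 3"
        using left_end \<open>u = v\<close> \<open>k + N - 2 * v = 0\<close> N_ge_2 by auto
      moreover have "v + (- 1) * N \<in> ?C"
        using vC dihedral_closure_add_mult by blast
      ultimately show ?thesis
        unfolding gap_before_def by auto
    qed
    then show ?thesis
      using gap_after_iff_gap_before_on_axis[OF sym] True by simp
  next
    case False
    have "v + 1 \<notin> ?C"
      using dihedral_closure_inter_domain[OF sub, of "v + 1"] False right_end sub uB left_bound by force
    then show ?thesis
      using gap_after_near_axis[OF sym vC] False right_end by auto
  qed
qed

lemma gap_before_dihedral_closure_first:
  assumes B: "B \<in> gap_chains u v"
  shows "gap_before (dihedral_closure N k B) u"
proof -
  let ?C = "dihedral_closure N k B"
  have sub: "B \<subseteq> {u..v}" and uB: "u \<in> B" and vB: "v \<in> B"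
    using B by (simp_all add: gap_chains_def)
  have uC: "u \<in> ?C"
    using uB subset_dihedral_closure by blast
  have sym: "reflect k ?C = ?C"
    by (rule reflect_dihedral_closure)
  show ?thesis
  proof (cases "2 * u - k = 0")
    case True
    have "gap_after ?C u"
    proof (cases "u < v")
      case True
      then show ?thesis
        using gap_after_dihedral_closure_inner[OF B uB] by blast
    next
      case False
      then have "u = v"
        using sub vB by auto
      then have "u + 1 \<notin> ?C"
        using dihedral_closure_inter_domain[OF sub, of "u + 1"] \<open>2 * u - k = 0\<close> N_ge_2 sub by auto
      moreover have "N = 2 \<or> N = 3"
        using right_end \<open>u = v\<close> \<open>2 * u - k = 0\<close> N_ge_2 by auto
      moreover have "u + 1 * N \<in> ?C"
        using uC dihedral_closure_add_mult by blast
      ultimately show ?thesis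
        unfolding gap_after_def by auto
    qed
    then show ?thesis
      using gap_after_iff_gap_before_on_axis[OF sym] True by simp
  next
    case False
    have "u - 1 \<notin> ?C"
      using dihedral_closure_inter_domain[OF sub, of "u - 1"] False left_end sub vB right_bound by force
    then show ?thesis
      using gap_before_near_axis[OF sym uC] False left_end by auto
  qed
qed

lemma gap_after_dihedral_closure:
  assumes B: "B \<in> gap_chains u v" and x: "x \<in> dihedral_closure N k B"
  shows "gap_after (dihedral_closure N k B) x"
proof -
  let ?C = "dihedral_closure N k B"
  have sub: "B \<subseteq> {u..v}"
    using B by (rule gap_chains_subset)
  obtain b m where b: "b \<in> B" and x_eq: "x = b + m * N \<or> x = k - b + m * N"
    using x unfolding dihedral_closure_def by blast
  have "gap_after ?C b"
    using gap_after_dihedral_closure_inner[OF B b] gap_after_dihedral_closure_last[OF B] b sub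
    by (cases "b < v") auto
  moreover have "gap_after ?C (k - b)"
    using gap_before_dihedral_closure_inner[OF B b] gap_before_dihedral_closure_first[OF B] b sub
      gap_after_reflect[OF reflect_dihedral_closure]
    by (cases "u < b") auto
  ultimately show ?thesis
    using x_eq gap_after_add_mult[OF periodic_dihedral_closure] by auto
qed

lemma dihedral_closure_in_symmetric_mis_ends:
  assumes B: "B \<in> gap_chains u v"
  shows "dihedral_closure N k B \<in> symmetric_mis_ends N k u v"
proof -
  let ?C = "dihedral_closure N k B"
  have sub: "B \<subseteq> {u..v}" and uB: "u \<in> B" and vB: "v \<in> B"
    using B by (simp_all add: gap_chains_def)
  have "u \<in> ?C"
    using uB subset_dihedral_closure by blast
  then have "path_mis ?C"
    using periodic_gaps_imp_path_mis[OF N_pos periodic_dihedral_closure] gap_after_dihedral_closure[OF B]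
    by blast
  moreover have "u \<le> z \<and> z \<le> v" if "z \<in> ?C" "k \<le> 2 * z" "2 * z \<le> k + N" for z
    using dihedral_closure_inter_domain[OF sub] that sub by auto
  ultimately show ?thesis
    using uB vB subset_dihedral_closure[of B N k] periodic_dihedral_closure reflect_dihedral_closure
    unfolding symmetric_mis_ends_def symmetric_mis_def periodic_mis_def by blast
qed

lemma symmetric_mis_ends_le:
  assumes P: "P \<in> symmetric_mis_ends N k u v"
  shows "u \<le> v"
proof -
  have uP: "u \<in> P" and vP: "v \<in> P" and sym: "reflect k P = P"
    and dom: "\<And>z. z \<in> P \<Longrightarrow> k \<le> 2 * z \<Longrightarrow> 2 * z \<le> k + N \<Longrightarrow> u \<le> z \<and> z \<le> v"
    using P unfolding symmetric_mis_ends_def symmetric_mis_def by blast+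
  show ?thesis
  proof (rule ccontr)
    assume "\<not> u \<le> v"
    then have "k + N < 2 * u" "2 * v < k"
      using dom[OF uP] dom[OF vP] left_bound right_bound by force+
    then have "2 * (k - v) = k + 1" "2 * u = k + 3"
      using left_end right_end N_ge_2 by auto
    moreover have "k - v \<in> P"
      using reflect_fixed_mem[OF sym] vP by blast
    ultimately show False
      using dom[of "k - v"] N_ge_2 by auto
  qed
qed

lemma symmetric_mis_ends_restrict:
  assumes P: "P \<in> symmetric_mis_ends N k u v"
  shows "P \<inter> {u..v} \<in> gap_chains u v"
  using path_mis_restrict[of P u v] symmetric_mis_ends_le[OF P] P
  unfolding symmetric_mis_ends_def symmetric_mis_def periodic_mis_def by blast

lemma dihedral_closure_restrict:
  assumes P: "P \<in> symmetric_mis_ends N k u v"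
  shows "dihedral_closure N k (P \<inter> {u..v}) = P"
proof -
  have "periodic N P" "reflect k P = P"
    and dom: "\<And>z. z \<in> P \<Longrightarrow> k \<le> 2 * z \<Longrightarrow> 2 * z \<le> k + N \<Longrightarrow> u \<le> z \<and> z \<le> v"
    using P unfolding symmetric_mis_ends_def symmetric_mis_def periodic_mis_def by blast+
  moreover have "P \<inter> {w. k \<le> 2 * w \<and> 2 * w \<le> k + N} = P \<inter> {u..v}"
    using dom left_bound right_bound by force
  ultimately show ?thesis
    using dihedral_closure_fundamental_domain[of N P k] N_ge_2 by simp
qed

lemma bij_betw_symmetric_mis_ends_gap_chains:
  "bij_betw (\<lambda>P. P \<inter> {u..v}) (symmetric_mis_ends N k u v) (gap_chains u v)"
proof (rule bij_betw_byWitness[where f' = "dihedral_closure N k"])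
  have "dihedral_closure N k B \<inter> {u..v} = B" if "B \<in> gap_chains u v" for B
    using dihedral_closure_inter_domain[OF gap_chains_subset[OF that]] gap_chains_subset[OF that]
      left_bound right_bound by auto
  then show "\<forall>B\<in>gap_chains u v. dihedral_closure N k B \<inter> {u..v} = B"
    by blast
  show "\<forall>P\<in>symmetric_mis_ends N k u v. dihedral_closure N k (P \<inter> {u..v}) = P"
    using dihedral_closure_restrict by blast
  show "(\<lambda>P. P \<inter> {u..v}) ` symmetric_mis_ends N k u v \<subseteq> gap_chains u v"
    using symmetric_mis_ends_restrict by blast
  show "dihedral_closure N k ` gap_chains u v \<subseteq> symmetric_mis_ends N k u v"
    using dihedral_closure_in_symmetric_mis_ends by blast
qed

lemma card_symmetric_mis_ends: "card (symmetric_mis_ends N k u v) = card (gap_chains u v)"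
  using bij_betw_same_card[OF bij_betw_symmetric_mis_ends_gap_chains] .

lemma symmetric_mis_ends_first:
  assumes P: "P \<in> symmetric_mis_ends N k u v" and z: "z \<in> P" "k \<le> 2 * z"
  shows "u \<le> z"
  using P z symmetric_mis_ends_le[OF P] right_bound unfolding symmetric_mis_ends_def by force

lemma symmetric_mis_ends_last:
  assumes P: "P \<in> symmetric_mis_ends N k u v" and z: "z \<in> P" "2 * z \<le> k + N"
  shows "z \<le> v"
  using P z symmetric_mis_ends_le[OF P] left_bound unfolding symmetric_mis_ends_def by force

end

lemma path_mis_first_after_axis:
  assumes P: "path_mis P" and sym: "reflect k P = P"
  obtains u where "u \<in> P" "2 * u - k \<in> {0, 2, 3}" "\<forall>z\<in>P. k \<le> 2 * z \<longrightarrow> u \<le> z"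
proof -
  have mirror: "k - z \<in> P \<longleftrightarrow> z \<in> P" for z
    using reflect_fixed_mem[OF sym] .
  have adj: "\<not> (z \<in> P \<and> z + 1 \<in> P)" and cover: "z \<in> P \<or> z + 1 \<in> P \<or> z + 2 \<in> P" for z
    using P unfolding path_mis_def by blast+
  define c where "c = k div 2"
  have "k = 2 * c \<or> k = 2 * c + 1"
    unfolding c_def by presburger
  then consider "k = 2 * c" "c \<in> P" | "k = 2 * c" "c \<notin> P" | "k = 2 * c + 1"
    by blast
  then show ?thesis
  proof cases
    case 1
    then show ?thesis
      using that[of c] by auto
  next
    case 2
    have "c - 1 \<in> P \<longleftrightarrow> c + 1 \<in> P"
      using mirror[of "c + 1"] 2 by simp
    then have "c + 1 \<in> P"
      using cover[of "c - 1"] 2 by (auto simp: algebra_simps)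
    moreover have "c + 1 \<le> z" if "z \<in> P" "k \<le> 2 * z" for z
      using that 2 by (cases "z = c") auto
    ultimately show ?thesis
      using that[of "c + 1"] 2 by auto
  next
    case 3
    have "c \<notin> P" "c + 1 \<notin> P"
      using mirror[of c] adj[of c] 3 by auto
    then have "c + 2 \<in> P"
      using cover[of c] by auto
    moreover have "c + 2 \<le> z" if "z \<in> P" "k \<le> 2 * z" for z
      using that 3 \<open>c + 1 \<notin> P\<close> by (cases "z = c + 1") auto
    ultimately show ?thesis
      using that[of "c + 2"] 3 by auto
  qed
qed

lemma path_mis_last_before_axis:
  assumes P: "path_mis P" and sym: "reflect k P = P"
  obtains v where "v \<in> P" "k - 2 * v \<in> {0, 2, 3}" "\<forall>z\<in>P. 2 * z \<le> k \<longrightarrow> z \<le> v"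
proof -
  have "reflect 0 P = translate (- k) P"
    using reflect_reflect[of 0 k P] sym by simp
  then have "reflect (- k) (reflect 0 P) = reflect 0 P"
    by simp
  then obtain u where u: "u \<in> reflect 0 P" "2 * u - (- k) \<in> {0, 2, 3}"
    "\<forall>z\<in>reflect 0 P. - k \<le> 2 * z \<longrightarrow> u \<le> z"
    using path_mis_first_after_axis[OF path_mis_reflect[OF P]] by blast
  have "z \<le> - u" if "z \<in> P" "2 * z \<le> k" for z
  proof -
    have "- z \<in> reflect 0 P"
      using that(1) by simp
    then have "u \<le> - z"
      using u(3) that(2) by simp
    then show ?thesis
      by simp
  qed
  moreover have "- u \<in> P" "k - 2 * (- u) \<in> {0, 2, 3}"
    using u(1,2) by (simp_all add: add.commute)
  ultimately show ?thesis
    using that[of "- u"] by blast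
qed

definition segment_ends :: "int \<Rightarrow> int \<Rightarrow> (int \<times> int) set" where
  "segment_ends N k = {(u, v). 2 * u - k \<in> {0, 2, 3} \<and> k + N - 2 * v \<in> {0, 2, 3}}"

lemma symmetric_segmentI: "2 \<le> N \<Longrightarrow> (u, v) \<in> segment_ends N k \<Longrightarrow> symmetric_segment N k u v"
  by (simp add: symmetric_segment_def segment_ends_def)

lemma finite_segment_ends: "finite (segment_ends N k)"
proof (rule finite_subset)
  show "segment_ends N k \<subseteq> (\<lambda>(a, b). ((k + a) div 2, (k + N - b) div 2)) ` ({0, 2, 3} \<times> {0, 2, 3})"
  proof
    fix p
    assume "p \<in> segment_ends N k"
    then obtain u v where p: "p = (u, v)" "2 * u - k \<in> {0, 2, 3}" "k + N - 2 * v \<in> {0, 2, 3}"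
      unfolding segment_ends_def by blast
    have "p = (\<lambda>(a, b). ((k + a) div 2, (k + N - b) div 2)) (2 * u - k, k + N - 2 * v)"
      using p(1) by simp
    then show "p \<in> (\<lambda>(a, b). ((k + a) div 2, (k + N - b) div 2)) ` ({0, 2, 3} \<times> {0, 2, 3})"
      using p(2,3) by blast
  qed
qed simp

lemma symmetric_mis_eq_Union:
  "symmetric_mis N k = (\<Union>(u, v)\<in>segment_ends N k. symmetric_mis_ends N k u v)"
proof
  show "(\<Union>(u, v)\<in>segment_ends N k. symmetric_mis_ends N k u v) \<subseteq> symmetric_mis N k"
    unfolding symmetric_mis_ends_def by blast
  show "symmetric_mis N k \<subseteq> (\<Union>(u, v)\<in>segment_ends N k. symmetric_mis_ends N k u v)"
  proof
    fix P
    assume P: "P \<in> symmetric_mis N k"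
    then have mis: "path_mis P" and per: "periodic N P" and sym: "reflect k P = P"
      unfolding symmetric_mis_def periodic_mis_def by blast+
    have sym': "reflect (k + N) P = P"
      using reflect_periodic[OF per, of k 1] sym by simp
    obtain u where u: "u \<in> P" "2 * u - k \<in> {0, 2, 3}" "\<forall>z\<in>P. k \<le> 2 * z \<longrightarrow> u \<le> z"
      using path_mis_first_after_axis[OF mis sym] by blast
    obtain v where v: "v \<in> P" "k + N - 2 * v \<in> {0, 2, 3}" "\<forall>z\<in>P. 2 * z \<le> k + N \<longrightarrow> z \<le> v"
      using path_mis_last_before_axis[OF mis sym'] by blast
    have "P \<in> symmetric_mis_ends N k u v"
      using P u v unfolding symmetric_mis_ends_def by blast
    moreover have "(u, v) \<in> segment_ends N k"
      using u v unfolding segment_ends_def by blast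
    ultimately show "P \<in> (\<Union>(u, v)\<in>segment_ends N k. symmetric_mis_ends N k u v)"
      by blast
  qed
qed

lemma symmetric_mis_ends_disjoint:
  assumes "2 \<le> N" "(u, v) \<in> segment_ends N k" "(u', v') \<in> segment_ends N k"
    and "P \<in> symmetric_mis_ends N k u v" "P \<in> symmetric_mis_ends N k u' v'"
  shows "u = u' \<and> v = v'"
proof -
  interpret uv: symmetric_segment N k u v
    using assms(1,2) by (rule symmetric_segmentI)
  interpret uv': symmetric_segment N k u' v'
    using assms(1,3) by (rule symmetric_segmentI)
  have P: "u \<in> P" "u' \<in> P" "v \<in> P" "v' \<in> P"
    using assms(4,5) unfolding symmetric_mis_ends_def by blast+
  have "u \<le> u'" "u' \<le> u"
    using uv.symmetric_mis_ends_first[OF assms(4) P(2) uv'.left_bound]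
      uv'.symmetric_mis_ends_first[OF assms(5) P(1) uv.left_bound] by simp_all
  moreover have "v' \<le> v" "v \<le> v'"
    using uv.symmetric_mis_ends_last[OF assms(4) P(4) uv'.right_bound]
      uv'.symmetric_mis_ends_last[OF assms(5) P(3) uv.right_bound] by simp_all
  ultimately show ?thesis
    by simp
qed

lemma card_symmetric_mis:
  assumes "2 \<le> N"
  shows "card (symmetric_mis N k) = (\<Sum>(u, v)\<in>segment_ends N k. card (gap_chains u v))"
proof -
  have card_ends: "card (symmetric_mis_ends N k u v) = card (gap_chains u v)"
    and finite_ends: "finite (symmetric_mis_ends N k u v)" if "(u, v) \<in> segment_ends N k" for u v
  proof -
    interpret symmetric_segment N k u v
      using assms that by (rule symmetric_segmentI)
    show "card (symmetric_mis_ends N k u v) = card (gap_chains u v)"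
      by (rule card_symmetric_mis_ends)
    show "finite (symmetric_mis_ends N k u v)"
      using bij_betw_finite[OF bij_betw_symmetric_mis_ends_gap_chains] finite_gap_chains by blast
  qed
  define A where "A = (\<lambda>(u, v). symmetric_mis_ends N k u v)"
  have "\<forall>p\<in>segment_ends N k. finite (A p)"
    using finite_ends unfolding A_def by auto
  moreover have "\<forall>p\<in>segment_ends N k. \<forall>q\<in>segment_ends N k. p \<noteq> q \<longrightarrow> A p \<inter> A q = {}"
    using symmetric_mis_ends_disjoint[OF assms] unfolding A_def by fast
  ultimately have "card (symmetric_mis N k) = (\<Sum>p\<in>segment_ends N k. card (A p))"
    unfolding symmetric_mis_eq_Union A_def by (intro card_UN_disjoint finite_segment_ends) auto
  also have "\<dots> = (\<Sum>(u, v)\<in>segment_ends N k. card (gap_chains u v))"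
    using card_ends unfolding A_def by (intro sum.cong) auto
  finally show ?thesis .
qed

lemma segment_ends_odd: "segment_ends (2 * h + 1) 0 = {(0, h - 1), (1, h - 1)}"
proof -
  have "2 * u \<in> {0, 2, 3} \<longleftrightarrow> u = 0 \<or> u = 1" "2 * h + 1 - 2 * v \<in> {0, 2, 3} \<longleftrightarrow> v = h - 1" for u v :: int
    by (simp; presburger)+
  then show ?thesis
    unfolding segment_ends_def by auto
qed

lemma segment_ends_even_0: "segment_ends (2 * h) 0 = {(0, h), (0, h - 1), (1, h), (1, h - 1)}"
proof -
  have "2 * u \<in> {0, 2, 3} \<longleftrightarrow> u = 0 \<or> u = 1" "2 * h - 2 * v \<in> {0, 2, 3} \<longleftrightarrow> v = h \<or> v = h - 1" for u v :: int
    by (simp; presburger)+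
  then show ?thesis
    unfolding segment_ends_def by auto
qed

lemma segment_ends_even_1: "segment_ends (2 * h) 1 = {(2, h - 1)}"
proof -
  have "2 * u - 1 \<in> {0, 2, 3} \<longleftrightarrow> u = 2" "1 + 2 * h - 2 * v \<in> {0, 2, 3} \<longleftrightarrow> v = h - 1" for u v :: int
    by (simp; presburger)+
  then show ?thesis
    unfolding segment_ends_def by auto
qed

section \<open>Counting orbits\<close>

definition dihedral_orbit :: "int set \<Rightarrow> int set set" where
  "dihedral_orbit P = range (\<lambda>j. translate j P) \<union> range (\<lambda>j. reflect j P)"

definition reflective_mis :: "int \<Rightarrow> int set set" where
  "reflective_mis N = {P \<in> periodic_mis N. \<exists>k. reflect k P = P}"

lemma mem_dihedral_orbit: "Q \<in> dihedral_orbit P \<longleftrightarrow> (\<exists>c. Q = translate c P \<or> Q = reflect c P)"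
  by (auto simp: dihedral_orbit_def)

lemma self_in_dihedral_orbit: "P \<in> dihedral_orbit P"
  unfolding mem_dihedral_orbit by (metis translate_0)

lemma dihedral_orbit_trans:
  assumes "Q \<in> dihedral_orbit P" "R \<in> dihedral_orbit Q"
  shows "R \<in> dihedral_orbit P"
proof -
  obtain c d where "Q = translate c P \<or> Q = reflect c P" "R = translate d Q \<or> R = reflect d Q"
    using assms by (auto simp: mem_dihedral_orbit)
  then have "R = translate (d + c) P \<or> R = reflect (d + c) P \<or> R = reflect (d - c) P \<or> R = translate (d - c) P"
    by auto
  then show ?thesis
    by (auto simp: mem_dihedral_orbit)
qed

lemma dihedral_orbit_sym:
  assumes "Q \<in> dihedral_orbit P"
  shows "P \<in> dihedral_orbit Q"
proof -
  obtain c where "Q = translate c P \<or> Q = reflect c P"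
    using assms by (auto simp: mem_dihedral_orbit)
  then have "P = translate (- c) Q \<or> P = reflect c Q"
    by auto
  then show ?thesis
    by (auto simp: mem_dihedral_orbit)
qed

lemma dihedral_orbit_eq: "Q \<in> dihedral_orbit P \<Longrightarrow> dihedral_orbit Q = dihedral_orbit P"
  using dihedral_orbit_trans dihedral_orbit_sym by blast

lemma finite_dihedral_orbit:
  assumes "0 < N" "periodic N P"
  shows "finite (dihedral_orbit P)"
proof (rule finite_subset)
  show "dihedral_orbit P \<subseteq> (\<lambda>j. translate j P) ` {0..<N} \<union> (\<lambda>j. reflect j P) ` {0..<N}"
  proof
    fix Q
    assume "Q \<in> dihedral_orbit P"
    then obtain j where "Q = translate j P \<or> Q = reflect j P"
      by (auto simp: mem_dihedral_orbit)
    moreover have "translate j P = translate (j mod N) P" "reflect j P = reflect (j mod N) P"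
      using translate_periodic[OF assms(2), of "j mod N" "j div N"]
        reflect_periodic[OF assms(2), of "j mod N" "j div N"] by simp_all
    moreover have "j mod N \<in> {0..<N}"
      using assms(1) by simp
    ultimately show "Q \<in> (\<lambda>j. translate j P) ` {0..<N} \<union> (\<lambda>j. reflect j P) ` {0..<N}"
      by blast
  qed
qed simp

lemma dihedral_orbit_reflection_symmetric:
  assumes "reflect a P = P" "Q \<in> dihedral_orbit P"
  obtains c where "Q = translate c P"
proof -
  have "reflect c P = translate (c - a) P" for c
    using reflect_reflect[of c a P] assms(1) by simp
  then show ?thesis
    using assms(2) that unfolding mem_dihedral_orbit by metis
qed

lemma reflective_mis_dihedral_orbit:
  assumes P: "P \<in> reflective_mis N" and Q: "Q \<in> dihedral_orbit P"
  shows "Q \<in> reflective_mis N"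
proof -
  obtain a where a: "reflect a P = P"
    using P unfolding reflective_mis_def by blast
  obtain c where c: "Q = translate c P"
    using dihedral_orbit_reflection_symmetric[OF a Q] by blast
  have "reflect (a + 2 * c) Q = reflect (a + c) P" "Q = reflect (c + a) P"
    using c translate_reflect[of c a P] a by (simp_all add: algebra_simps)
  then have "reflect (a + 2 * c) Q = Q"
    by (simp add: add.commute)
  moreover have "Q \<in> periodic_mis N"
    using P c periodic_mis_translate unfolding reflective_mis_def by blast
  ultimately show ?thesis
    unfolding reflective_mis_def by blast
qed

lemma card_periodic_shift:
  fixes N c :: int
  assumes "0 < N" and per: "\<And>z. Pr (z + N) = Pr z"
  shows "card {j \<in> {0..<N}. Pr (j + c)} = card {j \<in> {0..<N}. Pr j}"
proof -
  have Pr_mod: "Pr (z mod N) = Pr z" for z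
    using periodic_mod[of N "Collect Pr" z] per unfolding periodic_def by simp
  have "bij_betw (\<lambda>j. (j + c) mod N) {j \<in> {0..<N}. Pr (j + c)} {j \<in> {0..<N}. Pr j}"
  proof (rule bij_betw_byWitness[where f' = "\<lambda>j. (j - c) mod N"])
    show "\<forall>j\<in>{j \<in> {0..<N}. Pr (j + c)}. ((j + c) mod N - c) mod N = j"
      by (auto simp: mod_simps)
    show "\<forall>j\<in>{j \<in> {0..<N}. Pr j}. ((j - c) mod N + c) mod N = j"
      by (auto simp: mod_simps)
    show "(\<lambda>j. (j + c) mod N) ` {j \<in> {0..<N}. Pr (j + c)} \<subseteq> {j \<in> {0..<N}. Pr j}"
      using assms(1) Pr_mod by auto
    have "Pr ((j - c) mod N + c) = Pr j" if "0 \<le> j" "j < N" for j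
      using Pr_mod[of "(j - c) mod N + c"] that by (simp add: mod_simps)
    then show "(\<lambda>j. (j - c) mod N) ` {j \<in> {0..<N}. Pr j} \<subseteq> {j \<in> {0..<N}. Pr (j + c)}"
      using assms(1) by auto
  qed
  then show ?thesis
    by (rule bij_betw_same_card)
qed

lemma card_translate_shift:
  assumes "0 < N" "periodic N P"
  shows "card {j \<in> {0..<N}. translate (j + d) P = P} = card {j \<in> {0..<N}. translate j P = P}"
  using card_periodic_shift[OF assms(1), of "\<lambda>j. translate j P = P"]
    translate_periodic[OF assms(2), of _ 1] by simp

lemma card_translate_eq_translate:
  assumes "0 < N" "periodic N P"
  shows "card {j \<in> {0..<N}. translate j P = translate c P} = card {j \<in> {0..<N}. translate j P = P}"
proof -
  have "translate j P = translate c P \<longleftrightarrow> translate (- c) (translate j P) = translate (- c) (translate c P)" for j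
    by (rule translate_inject[symmetric])
  also have "\<dots> j \<longleftrightarrow> translate (j + - c) P = P" for j
    by simp
  finally show ?thesis
    using card_translate_shift[OF assms, of "- c"] by simp
qed

lemma card_reflect_fixing_translate:
  assumes "0 < N" "periodic N P" "reflect a P = P"
  shows "card {k \<in> {0..<N}. reflect k (translate c P) = translate c P} = card {j \<in> {0..<N}. translate j P = P}"
proof -
  have reflect_eq: "reflect m P = translate (m - a) P" for m
    using reflect_reflect[of m a P] assms(3) by simp
  have "reflect k (translate c P) = translate c P
      \<longleftrightarrow> translate (- c) (reflect k (translate c P)) = translate (- c) (translate c P)" for k
    by (rule translate_inject[symmetric])
  also have "\<dots> k \<longleftrightarrow> translate (k + (- 2 * c - a)) P = P" for k
    using reflect_eq[of "k - 2 * c"] by (simp add: algebra_simps)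
  finally show ?thesis
    using card_translate_shift[OF assms(1,2)] by simp
qed

text \<open>Orbit-stabiliser in disguise: if t of the N translations fix P, the orbit has N / t members,
  each fixed by exactly t of the N reflections.\<close>

lemma sum_dihedral_orbit_reflections:
  assumes N: "0 < N" and per: "periodic N P" and a: "reflect a P = P"
  shows "(\<Sum>Q\<in>dihedral_orbit P. card {k \<in> {0..<N}. reflect k Q = Q}) = nat N"
proof -
  define t where "t = card {j \<in> {0..<N}. translate j P = P}"
  have fixed: "card {k \<in> {0..<N}. reflect k Q = Q} = t"
    and fibre: "card {j \<in> {0..<N}. translate j P = Q} = t" if Q: "Q \<in> dihedral_orbit P" for Q
  proof -
    obtain c where "Q = translate c P"
      using dihedral_orbit_reflection_symmetric[OF a Q] by blast
    then show "card {k \<in> {0..<N}. reflect k Q = Q} = t" "card {j \<in> {0..<N}. translate j P = Q} = t"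
      unfolding t_def using card_reflect_fixing_translate[OF N per a] card_translate_eq_translate[OF N per]
      by simp_all
  qed
  have "(\<Sum>j\<in>{0..<N}. card {Q \<in> dihedral_orbit P. translate j P = Q}) = t * card (dihedral_orbit P)"
    using fibre finite_dihedral_orbit[OF N per] by (intro sum_multicount) auto
  moreover have "{Q \<in> dihedral_orbit P. translate j P = Q} = {translate j P}" for j
    by (auto simp: mem_dihedral_orbit)
  ultimately have "t * card (dihedral_orbit P) = nat N"
    by simp
  then show ?thesis
    using fixed by (simp add: mult.commute)
qed

lemma sum_card_symmetric_mis:
  assumes N: "0 < N"
  shows "(\<Sum>k\<in>{0..<N}. card (symmetric_mis N k)) = nat N * card (dihedral_orbit ` reflective_mis N)"
proof -
  let ?R = "reflective_mis N"
  have finR: "finite ?R"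
    using finite_periodic_mis[OF N] by (rule finite_subset[rotated]) (auto simp: reflective_mis_def)
  have sym_eq: "symmetric_mis N k = {P \<in> ?R. reflect k P = P}" for k
    unfolding symmetric_mis_def reflective_mis_def by blast
  have R_eq: "?R = \<Union> (dihedral_orbit ` ?R)"
    using reflective_mis_dihedral_orbit self_in_dihedral_orbit by blast
  have orbit_fin: "\<forall>Orb\<in>dihedral_orbit ` ?R. finite Orb"
    using finite_dihedral_orbit[OF N] unfolding reflective_mis_def periodic_mis_def by blast
  have orbit_disj: "\<forall>Orb\<in>dihedral_orbit ` ?R. \<forall>Orb'\<in>dihedral_orbit ` ?R. Orb \<noteq> Orb' \<longrightarrow> Orb \<inter> Orb' = {}"
    using dihedral_orbit_eq by blast
  have orbit_sum: "(\<Sum>Q\<in>Orb. card {k \<in> {0..<N}. reflect k Q = Q}) = nat N"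
    if "Orb \<in> dihedral_orbit ` ?R" for Orb
    using that sum_dihedral_orbit_reflections[OF N] unfolding reflective_mis_def periodic_mis_def by blast
  have "(\<Sum>k\<in>{0..<N}. card (symmetric_mis N k)) = (\<Sum>P\<in>?R. card {k \<in> {0..<N}. reflect k P = P})"
    unfolding sym_eq using finR by (intro sum_multicount_gen) auto
  also have "\<dots> = (\<Sum>Orb\<in>dihedral_orbit ` ?R. \<Sum>Q\<in>Orb. card {k \<in> {0..<N}. reflect k Q = Q})"
    by (subst R_eq, rule sum.Union_disjoint[OF orbit_fin orbit_disj, unfolded comp_def])
  also have "\<dots> = nat N * card (dihedral_orbit ` ?R)"
    using orbit_sum by simp
  finally show ?thesis .
qed

lemma symmetric_mis_add_2: "symmetric_mis N (k + 2) = translate 1 ` symmetric_mis N k"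
proof
  show "translate 1 ` symmetric_mis N k \<subseteq> symmetric_mis N (k + 2)"
  proof
    fix Q
    assume "Q \<in> translate 1 ` symmetric_mis N k"
    then obtain P where P: "P \<in> periodic_mis N" "reflect k P = P" and Q: "Q = translate 1 P"
      unfolding symmetric_mis_def by blast
    have "reflect (k + 2) Q = Q"
      using Q translate_reflect[of 1 k P] P(2) by (simp add: algebra_simps)
    then show "Q \<in> symmetric_mis N (k + 2)"
      using P(1) Q periodic_mis_translate unfolding symmetric_mis_def by blast
  qed
  show "symmetric_mis N (k + 2) \<subseteq> translate 1 ` symmetric_mis N k"
  proof
    fix Q
    assume "Q \<in> symmetric_mis N (k + 2)"
    then have Q: "Q \<in> periodic_mis N" "reflect (k + 2) Q = Q"
      unfolding symmetric_mis_def by blast+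
    define P where "P = translate (- 1) Q"
    have "reflect k P = P"
      unfolding P_def using translate_reflect[of "- 1" "k + 2" Q] Q(2) by (simp add: algebra_simps)
    then have "P \<in> symmetric_mis N k"
      using Q(1) periodic_mis_translate unfolding symmetric_mis_def P_def by blast
    moreover have "Q = translate 1 P"
      unfolding P_def by simp
    ultimately show "Q \<in> translate 1 ` symmetric_mis N k"
      by blast
  qed
qed

lemma card_symmetric_mis_add_even: "card (symmetric_mis N (k + 2 * int m)) = card (symmetric_mis N k)"
proof (induction m)
  case (Suc m)
  have "card (symmetric_mis N (k + 2 * int (Suc m))) = card (translate 1 ` symmetric_mis N (k + 2 * int m))"
    using symmetric_mis_add_2[of N "k + 2 * int m"] by (simp add: algebra_simps)
  also have "\<dots> = card (symmetric_mis N (k + 2 * int m))"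
    by (rule card_image) (simp add: inj_on_def)
  finally show ?case
    using Suc by simp
qed simp

lemma symmetric_mis_add_period: "symmetric_mis N (k + N) = symmetric_mis N k"
  using reflect_periodic[of N _ k 1] unfolding symmetric_mis_def periodic_mis_def by auto

lemma sum_card_symmetric_mis_odd:
  assumes "odd N" "0 < N"
  shows "(\<Sum>k\<in>{0..<N}. card (symmetric_mis N k)) = nat N * card (symmetric_mis N 0)"
proof -
  have const: "card (symmetric_mis N k) = card (symmetric_mis N 0)" if "k \<in> {0..<N}" for k
  proof (cases "even k")
    case True
    define m where "m = nat (k div 2)"
    have "k = 2 * int m"
      using True that unfolding m_def by simp
    then show ?thesis
      using card_symmetric_mis_add_even[of N 0 m] by simp
  next
    case False
    define m where "m = nat ((k + N) div 2)"
    have "k + N = 2 * int m"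
      using False that assms unfolding m_def by simp
    then show ?thesis
      using symmetric_mis_add_period[of N k] card_symmetric_mis_add_even[of N 0 m] by simp
  qed
  have "(\<Sum>k\<in>{0..<N}. card (symmetric_mis N k)) = (\<Sum>k\<in>{0..<N}. card (symmetric_mis N 0))"
    using const by (rule sum.cong[OF refl])
  then show ?thesis
    by simp
qed

lemma sum_card_symmetric_mis_even:
  "(\<Sum>k\<in>{0..<2 * int h}. card (symmetric_mis N k)) = h * (card (symmetric_mis N 0) + card (symmetric_mis N 1))"
proof (induction h)
  case (Suc h)
  have "{0..<2 * int (Suc h)} = insert (2 * int h + 1) (insert (2 * int h) {0..<2 * int h})"
    by auto
  moreover have "card (symmetric_mis N (2 * int h)) = card (symmetric_mis N 0)"
    using card_symmetric_mis_add_even[of N 0 h] by simp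
  moreover have "card (symmetric_mis N (2 * int h + 1)) = card (symmetric_mis N 1)"
    using card_symmetric_mis_add_even[of N 1 h] by (simp add: add.commute)
  ultimately show ?case
    using Suc by simp
qed simp

lemma card_reflective_orbits_odd:
  assumes "N = 2 * h + 1" "1 \<le> h"
  shows "card (dihedral_orbit ` reflective_mis N) = padovan (nat (h + 1))"
proof -
  have "nat N * card (dihedral_orbit ` reflective_mis N) = nat N * card (symmetric_mis N 0)"
    using sum_card_symmetric_mis[of N] sum_card_symmetric_mis_odd[of N] assms by simp
  then have "card (dihedral_orbit ` reflective_mis N) = card (symmetric_mis N 0)"
    using assms by simp
  also have "\<dots> = card (gap_chains 0 (h - 1)) + card (gap_chains 0 (h - 2))"
    using card_symmetric_mis[of N 0] assms card_gap_chains_translate[of 1 "h - 1"]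
    by (simp add: segment_ends_odd)
  also have "\<dots> = card (gap_chains 0 (h + 1))"
    using card_gap_chains_step[of 0 "h + 1"] assms by simp
  also have "\<dots> = padovan (nat (h + 1))"
    using assms by (simp add: card_gap_chains)
  finally show ?thesis .
qed

lemma card_reflective_orbits_even:
  assumes "N = 2 * h" "1 \<le> h"
  shows "card (dihedral_orbit ` reflective_mis N) = padovan (nat (h + 2))"
proof -
  let ?c = "\<lambda>v. card (gap_chains 0 v)"
  have "nat N * card (dihedral_orbit ` reflective_mis N)
      = nat h * (card (symmetric_mis N 0) + card (symmetric_mis N 1))"
    using sum_card_symmetric_mis[of N] sum_card_symmetric_mis_even[of N "nat h"] assms by simp
  then have "2 * card (dihedral_orbit ` reflective_mis N) = card (symmetric_mis N 0) + card (symmetric_mis N 1)"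
    using assms by (simp add: nat_mult_distrib)
  also have "\<dots> = ?c h + ?c (h - 1) + ?c (h - 1) + ?c (h - 2) + ?c (h - 3)"
    using card_symmetric_mis[of N 0] card_symmetric_mis[of N 1] assms
      card_gap_chains_translate[of 1 h] card_gap_chains_translate[of 1 "h - 1"]
      card_gap_chains_translate[of 2 "h - 1"]
    by (simp add: segment_ends_even_0 segment_ends_even_1)
  also have "\<dots> = 2 * (?c h + ?c (h - 1))"
    using card_gap_chains_step[of 0 h] assms by simp
  also have "?c h + ?c (h - 1) = ?c (h + 2)"
    using card_gap_chains_step[of 0 "h + 2"] assms by simp
  also have "\<dots> = padovan (nat (h + 2))"
    using assms by (simp add: card_gap_chains)
  finally show ?thesis
    by simp
qed

lemma card_reflective_orbits:
  assumes "1 \<le> N"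
  shows "card (dihedral_orbit ` reflective_mis N) = r_seq (nat N)"
proof -
  define h where "h = N div 2"
  have "N = 2 * h \<or> N = 2 * h + 1"
    unfolding h_def by presburger
  then consider "N = 1" | "N = 2 * h + 1" "1 \<le> h" | "N = 2 * h" "1 \<le> h"
    using assms by linarith
  then show ?thesis
  proof cases
    case 1
    then show ?thesis
      by (simp add: reflective_mis_def periodic_mis_1 r_seq_def)
  next
    case 2
    then have "r_seq (nat N) = padovan (nat (h + 1))"
      by (simp add: r_seq_def nat_add_distrib nat_mult_distrib)
    then show ?thesis
      using card_reflective_orbits_odd[OF 2] by simp
  next
    case 3
    then have "r_seq (nat N) = padovan (nat (h + 2))"
      by (simp add: r_seq_def nat_add_distrib nat_mult_distrib)
    then show ?thesis
      using card_reflective_orbits_even[OF 3] by simp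
  qed
qed

section \<open>Back to the cycle\<close>

lemma of_nat_dact:
  assumes "i < n"
  shows "int (dact n (k, b) i) = (if b then int k - int i else int i + int k) mod int n"
proof -
  have "(int k + int n - int i) mod int n = (int k - int i) mod int n"
    by (simp add: diff_add_eq[symmetric])
  then show ?thesis
    using assms by (auto simp: dact_def of_nat_mod of_nat_diff mod_simps)
qed

lemma mod_add_eq_iff: "(z::int) mod n = (i + k) mod n \<longleftrightarrow> (z - k) mod n = i mod n"
  by (simp add: mod_eq_dvd_iff algebra_simps)

lemma mod_diff_eq_iff: "(z::int) mod n = (k - i) mod n \<longleftrightarrow> (k - z) mod n = i mod n"
proof -
  have "k - z - i = - (z - (k - i))"
    by simp
  then show ?thesis
    by (simp only: mod_eq_dvd_iff dvd_minus_iff)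
qed
definition periodic_lift :: "nat \<Rightarrow> nat set \<Rightarrow> int set" where
  "periodic_lift n X = {z. nat (z mod int n) \<in> X}"

lemma mem_periodic_lift_iff:
  assumes "1 \<le> n"
  shows "z \<in> periodic_lift n X \<longleftrightarrow> (\<exists>i\<in>X. z mod int n = int i)"
proof -
  have "nat (z mod int n) = i \<longleftrightarrow> z mod int n = int i" for i
    using assms by auto
  then show ?thesis
    unfolding periodic_lift_def by auto
qed

lemma periodic_lift_of_nat: "i < n \<Longrightarrow> int i \<in> periodic_lift n X \<longleftrightarrow> i \<in> X"
  by (simp add: periodic_lift_def flip: of_nat_mod)

lemma inj_on_periodic_lift: "inj_on (periodic_lift n) (Pow {0..<n})"
proof (rule inj_onI)
  fix X Y
  assume "X \<in> Pow {0..<n}" "Y \<in> Pow {0..<n}" "periodic_lift n X = periodic_lift n Y"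
  then show "X = Y"
    using periodic_lift_of_nat[of _ n X] periodic_lift_of_nat[of _ n Y] by auto
qed

lemma periodic_periodic_lift: "periodic (int n) (periodic_lift n X)"
  by (simp add: periodic_def periodic_lift_def)

lemma periodic_lift_restrict:
  assumes "1 \<le> n" "periodic (int n) P"
  shows "P = periodic_lift n {i. i < n \<and> int i \<in> P}"
proof -
  have "z \<in> P \<longleftrightarrow> int (nat (z mod int n)) \<in> P" for z
    using periodic_mod[OF assms(2), of z] assms(1) by simp
  moreover have "nat (z mod int n) < n" for z
    using assms(1) by (simp add: nat_less_iff)
  ultimately show ?thesis
    unfolding periodic_lift_def by blast
qed

lemma periodic_lift_add:
  assumes "1 \<le> n"
  shows "z + int c \<in> periodic_lift n X \<longleftrightarrow> (nat (z mod int n) + c) mod n \<in> X"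
proof -
  have "int ((nat (z mod int n) + c) mod n) = (z + int c) mod int n"
    using assms by (simp add: of_nat_mod mod_simps)
  then have "nat ((z + int c) mod int n) = (nat (z mod int n) + c) mod n"
    by (metis nat_int)
  then show ?thesis
    unfolding periodic_lift_def by simp
qed

lemma periodic_lift_local_iff:
  assumes n: "1 \<le> n"
  shows "(\<forall>i<n. Q (i \<in> X) ((i + 1) mod n \<in> X) ((i + 2) mod n \<in> X))
    \<longleftrightarrow> (\<forall>z. Q (z \<in> periodic_lift n X) (z + 1 \<in> periodic_lift n X) (z + 2 \<in> periodic_lift n X))"
proof -
  have mem: "z \<in> periodic_lift n X \<longleftrightarrow> nat (z mod int n) \<in> X" for z
    unfolding periodic_lift_def by simp
  have lt: "nat (z mod int n) < n" for z
    using n by (simp add: nat_less_iff)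
  have small: "nat (int i mod int n) = i" if "i < n" for i
    using that by (simp flip: of_nat_mod)
  show ?thesis
  proof
    assume H: "\<forall>i<n. Q (i \<in> X) ((i + 1) mod n \<in> X) ((i + 2) mod n \<in> X)"
    show "\<forall>z. Q (z \<in> periodic_lift n X) (z + 1 \<in> periodic_lift n X) (z + 2 \<in> periodic_lift n X)"
    proof
      fix z
      have "Q (nat (z mod int n) \<in> X) ((nat (z mod int n) + 1) mod n \<in> X) ((nat (z mod int n) + 2) mod n \<in> X)"
        using H lt by blast
      then show "Q (z \<in> periodic_lift n X) (z + 1 \<in> periodic_lift n X) (z + 2 \<in> periodic_lift n X)"
        using mem[of z] periodic_lift_add[OF n, of z 1] periodic_lift_add[OF n, of z 2] by simp
    qed
  next
    assume H: "\<forall>z. Q (z \<in> periodic_lift n X) (z + 1 \<in> periodic_lift n X) (z + 2 \<in> periodic_lift n X)"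
    show "\<forall>i<n. Q (i \<in> X) ((i + 1) mod n \<in> X) ((i + 2) mod n \<in> X)"
    proof (intro allI impI)
      fix i
      assume "i < n"
      then show "Q (i \<in> X) ((i + 1) mod n \<in> X) ((i + 2) mod n \<in> X)"
        using H[rule_format, of "int i"] mem[of "int i"] small
          periodic_lift_add[OF n, of "int i" 1] periodic_lift_add[OF n, of "int i" 2] by simp
    qed
  qed
qed

lemma Xfam_iff_periodic_mis:
  assumes n: "1 \<le> n" and X: "X \<subseteq> {0..<n}"
  shows "X \<in> Xfam n \<longleftrightarrow> periodic_lift n X \<in> periodic_mis (int n)"
  using periodic_lift_local_iff[OF n, of "\<lambda>a b c. \<not> (a \<and> b)" X]
    periodic_lift_local_iff[OF n, of "\<lambda>a b c. a \<or> b \<or> c" X] X periodic_periodic_lift[of n X]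
  unfolding Xfam_def periodic_mis_def path_mis_def by simp

lemma periodic_lift_dact_set:
  assumes n: "1 \<le> n" and X: "X \<subseteq> {0..<n}"
  shows "periodic_lift n (dact_set n (k, b) X) = (if b then reflect (int k) else translate (int k)) (periodic_lift n X)"
proof (rule set_eqI)
  fix z
  have dact: "int (dact n (k, b) i) = (if b then int k - int i else int i + int k) mod int n" if "i \<in> X" for i
    using of_nat_dact X that by auto
  have small: "int i mod int n = int i" if "i \<in> X" for i
    using X that by auto
  have "z \<in> periodic_lift n (dact_set n (k, b) X) \<longleftrightarrow> (\<exists>i\<in>X. z mod int n = int (dact n (k, b) i))"
    unfolding mem_periodic_lift_iff[OF n] dact_set_def by blast
  also have "\<dots> \<longleftrightarrow> (\<exists>i\<in>X. z mod int n = (if b then int k - int i else int i + int k) mod int n)"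
    by (simp add: dact)
  also have "\<dots> \<longleftrightarrow> (\<exists>i\<in>X. (if b then int k - z else z - int k) mod int n = int i)"
    by (cases b) (simp_all add: mod_add_eq_iff mod_diff_eq_iff small)
  also have "\<dots> \<longleftrightarrow> z \<in> (if b then reflect (int k) else translate (int k)) (periodic_lift n X)"
    by (cases b) (simp_all add: mem_periodic_lift_iff[OF n])
  finally show "z \<in> periodic_lift n (dact_set n (k, b) X)
      \<longleftrightarrow> z \<in> (if b then reflect (int k) else translate (int k)) (periodic_lift n X)" .
qed

lemma dact_set_subset: "1 \<le> n \<Longrightarrow> dact_set n g X \<subseteq> {0..<n}"
  unfolding dact_set_def dact_def by (cases g) auto

lemma periodic_lift_orbit:
  assumes n: "1 \<le> n" and X: "X \<subseteq> {0..<n}"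
  shows "periodic_lift n ` orbit n X = dihedral_orbit (periodic_lift n X)"
proof
  show "periodic_lift n ` orbit n X \<subseteq> dihedral_orbit (periodic_lift n X)"
    using periodic_lift_dact_set[OF n X]
    by (auto simp: orbit_def dihedral_def mem_dihedral_orbit)
  show "dihedral_orbit (periodic_lift n X) \<subseteq> periodic_lift n ` orbit n X"
  proof
    fix Q
    assume "Q \<in> dihedral_orbit (periodic_lift n X)"
    then obtain j where Q: "Q = translate j (periodic_lift n X) \<or> Q = reflect j (periodic_lift n X)"
      unfolding mem_dihedral_orbit by blast
    define k where "k = nat (j mod int n)"
    have k: "k < n" "j = int k + (j div int n) * int n"
      using n unfolding k_def by (simp_all add: nat_less_iff)
    have "translate j (periodic_lift n X) = translate (int k) (periodic_lift n X)"
      "reflect j (periodic_lift n X) = reflect (int k) (periodic_lift n X)"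
      by (subst k(2), simp only: translate_periodic reflect_periodic periodic_periodic_lift)+
    then have "Q = periodic_lift n (dact_set n (k, False) X) \<or> Q = periodic_lift n (dact_set n (k, True) X)"
      using Q periodic_lift_dact_set[OF n X] by simp
    moreover have "dact_set n (k, b) X \<in> orbit n X" for b
      using k unfolding orbit_def dihedral_def by blast
    ultimately show "Q \<in> periodic_lift n ` orbit n X"
      by blast
  qed
qed

lemma dact_set_fixed_iff:
  assumes n: "1 \<le> n" and X: "X \<subseteq> {0..<n}"
  shows "dact_set n (k, b) X = X
    \<longleftrightarrow> (if b then reflect (int k) else translate (int k)) (periodic_lift n X) = periodic_lift n X"
  using periodic_lift_dact_set[OF n X] inj_onD[OF inj_on_periodic_lift] dact_set_subset[OF n] X
  by (metis PowI)

lemma periodic_lift_reflective: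
  assumes n: "1 \<le> n"
  shows "periodic_lift n ` {X \<in> Xfam n. \<exists>k<n. dact_set n (k, True) X = X} = reflective_mis (int n)"
proof
  show "periodic_lift n ` {X \<in> Xfam n. \<exists>k<n. dact_set n (k, True) X = X} \<subseteq> reflective_mis (int n)"
  proof
    fix P
    assume "P \<in> periodic_lift n ` {X \<in> Xfam n. \<exists>k<n. dact_set n (k, True) X = X}"
    then obtain X k where X: "X \<in> Xfam n" "dact_set n (k, True) X = X" and P: "P = periodic_lift n X"
      by blast
    have sub: "X \<subseteq> {0..<n}"
      using X(1) unfolding Xfam_def by blast
    have "reflect (int k) P = P"
      using dact_set_fixed_iff[OF n sub, of k True] X(2) P by simp
    then show "P \<in> reflective_mis (int n)"
      using Xfam_iff_periodic_mis[OF n sub] X(1) P unfolding reflective_mis_def by blast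
  qed
  show "reflective_mis (int n) \<subseteq> periodic_lift n ` {X \<in> Xfam n. \<exists>k<n. dact_set n (k, True) X = X}"
  proof
    fix P
    assume "P \<in> reflective_mis (int n)"
    then obtain a where P: "P \<in> periodic_mis (int n)" "reflect a P = P"
      unfolding reflective_mis_def by blast
    have per: "periodic (int n) P"
      using P(1) unfolding periodic_mis_def by blast
    define X where "X = {i. i < n \<and> int i \<in> P}"
    define k where "k = nat (a mod int n)"
    have sub: "X \<subseteq> {0..<n}"
      unfolding X_def by auto
    have PX: "P = periodic_lift n X"
      unfolding X_def using periodic_lift_restrict[OF n per] .
    have k: "k < n" "a = int k + (a div int n) * int n"
      using n unfolding k_def by (simp_all add: nat_less_iff)
    then have "reflect (int k) P = P"
      using reflect_periodic[OF per, of "int k" "a div int n"] P(2) by simp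
    then have "dact_set n (k, True) X = X"
      using dact_set_fixed_iff[OF n sub] PX by simp
    moreover have "X \<in> Xfam n"
      using Xfam_iff_periodic_mis[OF n sub] P(1) PX by simp
    ultimately show "P \<in> periodic_lift n ` {X \<in> Xfam n. \<exists>k<n. dact_set n (k, True) X = X}"
      using PX k(1) by blast
  qed
qed

lemma Stab_not_subset_rotations_iff:
  "\<not> Stab n X \<subseteq> rotations n \<longleftrightarrow> (\<exists>k<n. dact_set n (k, True) X = X)"
  unfolding Stab_def rotations_def dihedral_def by auto

theorem proposition3p4:
  fixes n :: nat
  assumes "n \<ge> 1"
  shows "card {orbit n X | X. X \<in> Xfam n \<and> \<not> Stab n X \<subseteq> rotations n} = r_seq n"
proof -
  define A where "A = {X \<in> Xfam n. \<exists>k<n. dact_set n (k, True) X = X}"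
  have A_subset: "X \<subseteq> {0..<n}" if "X \<in> A" for X
    using that unfolding A_def Xfam_def by blast
  have "{orbit n X | X. X \<in> Xfam n \<and> \<not> Stab n X \<subseteq> rotations n} = orbit n ` A"
    unfolding A_def Stab_not_subset_rotations_iff by blast
  moreover have "\<Union> (orbit n ` A) \<subseteq> Pow {0..<n}"
    using dact_set_subset[OF assms] unfolding orbit_def by blast
  then have "inj_on (image (periodic_lift n)) (orbit n ` A)"
    by (intro inj_on_image inj_on_subset[OF inj_on_periodic_lift])
  moreover have "image (periodic_lift n) ` orbit n ` A = dihedral_orbit ` reflective_mis (int n)"
    using periodic_lift_orbit[OF assms A_subset] periodic_lift_reflective[OF assms]
    unfolding A_def image_image by (metis (no_types, lifting) image_cong image_image)
  ultimately show ?thesis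
    using card_image card_reflective_orbits[of "int n"] assms by fastforce
qed

end
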